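(* Let $1<w\le 2$, $h>1$, $k\ge 2$, and let $\frac12\le y_1<\dots<y_n\le h-\frac12$ be uniformly spaced with $y_{i+1}-y_i=\frac1k$ for all $i$. Let $(\mathbf x,\prec)$ be a $\frac1k$-reasonable layout of this instance and let $a\in\mathbb R$. Then there are at most $2(\log_2 k+1)$ standard bad squares $s_i$ with $y_i\in[a,a+1]$.
   Context: The instance is the strip $T=[0,w]\times[0,h]$ with the given $y_i$. A layout is a pair $(\mathbf x,\prec)$ where $\mathbf x=(x_1,\dots,x_n)$ with $x_i\in[\frac12,w-\frac12]$, and $\prec$ is a total order on the squares $s_1,\dots,s_n$, where $s_i$ is the closed axis-parallel unit square with centre $(x_i,y_i)$. If $s_i\prec s_j$ we say $s_j$ is in front of $s_i$ and $s_i$ is behind $s_j$. A point $p$ on the boundary of $s_i$ is visible if every square $s_j$ ($j\neq i$) containing $p$ is behind $s_i$, and covered otherwise. The visible perimeter of $s_i$ is the total length of its visible boundary points; the gap of $s_i$ is its visible perimeter minus $2$, the gap of a layout is the minimum gap of its squares, and a layout is $\varepsilon$-reasonable if its gap is larger than $\varepsilon$. A bad square is a square with at least two of its four corners covered; a standard bad square is a bad square one of whose vertical sides is entirely covered. *)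

theory Defs
  imports "HOL-Analysis.Analysis"
begin

text \<open>Squares are indexed by 0..<n. Square i is the closed axis-parallel unit
square with centre (x i, y i).\<close>

definition sq :: "(nat \<Rightarrow> real) \<Rightarrow> (nat \<Rightarrow> real) \<Rightarrow> nat \<Rightarrow> (real \<times> real) set" where
  "sq x y i = {p. \<bar>fst p - x i\<bar> \<le> 1/2 \<and> \<bar>snd p - y i\<bar> \<le> 1/2}"

text \<open>A layout: positions x i in [1/2, w - 1/2] and a strict total order prec
on the squares ("prec i j" means s_i is behind s_j).\<close>

definition is_layout :: "real \<Rightarrow> nat \<Rightarrow> (nat \<Rightarrow> real) \<Rightarrow> (nat \<Rightarrow> nat \<Rightarrow> bool) \<Rightarrow> bool" where
  "is_layout w n x prec \<longleftrightarrow>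
     (\<forall>i<n. 1/2 \<le> x i \<and> x i \<le> w - 1/2) \<and>
     (\<forall>i<n. \<not> prec i i) \<and>
     (\<forall>i<n. \<forall>j<n. \<forall>l<n. prec i j \<and> prec j l \<longrightarrow> prec i l) \<and>
     (\<forall>i<n. \<forall>j<n. i \<noteq> j \<longrightarrow> prec i j \<or> prec j i)"

definition visible :: "nat \<Rightarrow> (nat \<Rightarrow> real) \<Rightarrow> (nat \<Rightarrow> real) \<Rightarrow> (nat \<Rightarrow> nat \<Rightarrow> bool)
    \<Rightarrow> nat \<Rightarrow> real \<times> real \<Rightarrow> bool" where
  "visible n x y prec i p \<longleftrightarrow> (\<forall>j<n. j \<noteq> i \<and> p \<in> sq x y j \<longrightarrow> prec j i)"

definition left_side :: "(nat \<Rightarrow> real) \<Rightarrow> (nat \<Rightarrow> real) \<Rightarrow> nat \<Rightarrow> real \<Rightarrow> real \<times> real" where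
  "left_side x y i t = (x i - 1/2, y i + t)"
definition right_side :: "(nat \<Rightarrow> real) \<Rightarrow> (nat \<Rightarrow> real) \<Rightarrow> nat \<Rightarrow> real \<Rightarrow> real \<times> real" where
  "right_side x y i t = (x i + 1/2, y i + t)"
definition bottom_side :: "(nat \<Rightarrow> real) \<Rightarrow> (nat \<Rightarrow> real) \<Rightarrow> nat \<Rightarrow> real \<Rightarrow> real \<times> real" where
  "bottom_side x y i t = (x i + t, y i - 1/2)"
definition top_side :: "(nat \<Rightarrow> real) \<Rightarrow> (nat \<Rightarrow> real) \<Rightarrow> nat \<Rightarrow> real \<Rightarrow> real \<times> real" where
  "top_side x y i t = (x i + t, y i + 1/2)"

text \<open>Visible perimeter: total length of the visible boundary points, i.e. the
sum over the four sides of the 1-dimensional Lebesgue measure of the visible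
parameter values (corners have measure zero, so double counting is harmless).\<close>

definition vis_perimeter :: "nat \<Rightarrow> (nat \<Rightarrow> real) \<Rightarrow> (nat \<Rightarrow> real) \<Rightarrow> (nat \<Rightarrow> nat \<Rightarrow> bool)
    \<Rightarrow> nat \<Rightarrow> real" where
  "vis_perimeter n x y prec i =
     measure lebesgue {t \<in> {-1/2..1/2}. visible n x y prec i (left_side x y i t)} +
     measure lebesgue {t \<in> {-1/2..1/2}. visible n x y prec i (right_side x y i t)} +
     measure lebesgue {t \<in> {-1/2..1/2}. visible n x y prec i (bottom_side x y i t)} +
     measure lebesgue {t \<in> {-1/2..1/2}. visible n x y prec i (top_side x y i t)}"

definition gap :: "nat \<Rightarrow> (nat \<Rightarrow> real) \<Rightarrow> (nat \<Rightarrow> real) \<Rightarrow> (nat \<Rightarrow> nat \<Rightarrow> bool) \<Rightarrow> nat \<Rightarrow> real" where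
  "gap n x y prec i = vis_perimeter n x y prec i - 2"

definition reasonable :: "real \<Rightarrow> nat \<Rightarrow> (nat \<Rightarrow> real) \<Rightarrow> (nat \<Rightarrow> real) \<Rightarrow> (nat \<Rightarrow> nat \<Rightarrow> bool) \<Rightarrow> bool" where
  "reasonable eps n x y prec \<longleftrightarrow> (\<forall>i<n. gap n x y prec i > eps)"

definition corners :: "(nat \<Rightarrow> real) \<Rightarrow> (nat \<Rightarrow> real) \<Rightarrow> nat \<Rightarrow> (real \<times> real) set" where
  "corners x y i = {(x i - 1/2, y i - 1/2), (x i + 1/2, y i - 1/2),
                    (x i - 1/2, y i + 1/2), (x i + 1/2, y i + 1/2)}"

definition bad_square :: "nat \<Rightarrow> (nat \<Rightarrow> real) \<Rightarrow> (nat \<Rightarrow> real) \<Rightarrow> (nat \<Rightarrow> nat \<Rightarrow> bool) \<Rightarrow> nat \<Rightarrow> bool" where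
  "bad_square n x y prec i \<longleftrightarrow> card {c \<in> corners x y i. \<not> visible n x y prec i c} \<ge> 2"

definition standard_bad_square :: "nat \<Rightarrow> (nat \<Rightarrow> real) \<Rightarrow> (nat \<Rightarrow> real) \<Rightarrow> (nat \<Rightarrow> nat \<Rightarrow> bool) \<Rightarrow> nat \<Rightarrow> bool" where
  "standard_bad_square n x y prec i \<longleftrightarrow>
     bad_square n x y prec i \<and>
     ((\<forall>t\<in>{-1/2..1/2}. \<not> visible n x y prec i (left_side x y i t)) \<or>
      (\<forall>t\<in>{-1/2..1/2}. \<not> visible n x y prec i (right_side x y i t)))"

end

theory Submission
  imports Defs
begin

(* Let d_i = x_i - 1/2 be the distance of s_i from the left wall. If the left side of s_i is
   covered, the squares covering its two left corners lie in front of s_i and have x_j >= 1/2, so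
   at most the parts of the top and bottom sides of s_i beyond x = 1 are visible; with at most 1
   for the right side, gap > 1/k gives 1 + 1/k < 2 d_i. If moreover s_j is in front of s_i and
   |y_j - y_i| <= 1, then s_j also hides the part of the top or the bottom side of s_i left of
   x_j + 1/2 (w <= 2 puts x_j - 1/2 below 1), so 1 + 1/k < 2 d_i - d_j. Hence the defects
   1 + 1/k - d_i, which lie in [1/k, (1 + 1/k)/2), at least halve from each square to any square in
   front of it, and a window of height 1 holds at most log2 k + 1 squares with covered left side.
   Squares with covered right side are handled by the reflection x -> w - x. *)

lemma measure_Collect_le_of_lower_bound:
  assumes "\<And>t. t \<in> {a..b} \<Longrightarrow> P t \<Longrightarrow> c \<le> t"
  shows "measure lebesgue {t \<in> {a..b::real}. P t} \<le> max 0 (b - c)"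
proof (cases "{t \<in> {a..b}. P t} \<in> sets lebesgue")
  case True
  have "{t \<in> {a..b}. P t} \<subseteq> {c..b}"
    using assms by auto
  then have "measure lebesgue {t \<in> {a..b}. P t} \<le> measure lebesgue {c..b}"
    using True by (intro measure_mono_fmeasurable) simp_all
  then show ?thesis
    by (simp add: max_def)
qed (simp add: measure_notin_sets)

lemma measure_Collect_reflect:
  "measure lebesgue {t \<in> {-r..r::real}. P (- t)} = measure lebesgue {t \<in> {-r..r}. P t}"
proof -
  have "{t \<in> {-r..r::real}. P (- t)} = (\<lambda>t. (-1) *\<^sub>R t + 0) ` {t \<in> {-r..r}. P t}"
  proof (intro equalityI subsetI)
    fix t assume "t \<in> {t \<in> {-r..r}. P (- t)}"
    then show "t \<in> (\<lambda>t. (-1) *\<^sub>R t + 0) ` {t \<in> {-r..r}. P t}"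
      by (intro image_eqI[of _ _ "- t"]) auto
  qed auto
  then show ?thesis
    using measure_lebesgue_affine[of "-1" 0 "{t \<in> {-r..r::real}. P t}"] by simp
qed

definition visible_length ::
    "nat \<Rightarrow> (nat \<Rightarrow> real) \<Rightarrow> (nat \<Rightarrow> real) \<Rightarrow> (nat \<Rightarrow> nat \<Rightarrow> bool) \<Rightarrow> nat
      \<Rightarrow> (real \<Rightarrow> real \<times> real) \<Rightarrow> real" where
  "visible_length n x y prec i side =
     measure lebesgue {t \<in> {-1/2..1/2}. visible n x y prec i (side t)}"

lemma vis_perimeter_eq_visible_length:
  "vis_perimeter n x y prec i =
     visible_length n x y prec i (left_side x y i) + visible_length n x y prec i (right_side x y i) +
     visible_length n x y prec i (bottom_side x y i) + visible_length n x y prec i (top_side x y i)"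
  by (simp add: vis_perimeter_def visible_length_def)

lemma visible_length_le_1: "visible_length n x y prec i side \<le> 1"
  using measure_Collect_le_of_lower_bound[of "-1/2" "1/2" "\<lambda>t. visible n x y prec i (side t)" "-1/2"]
  by (simp add: visible_length_def)

lemma visible_outside_square_in_front:
  assumes "visible n x y prec i (a, b)" "j < n" "j \<noteq> i" "\<not> prec j i" "\<bar>b - y j\<bar> \<le> 1/2"
  shows "\<bar>a - x j\<bar> > 1/2"
  using assms by (force simp: visible_def sq_def)

definition left_covered ::
    "nat \<Rightarrow> (nat \<Rightarrow> real) \<Rightarrow> (nat \<Rightarrow> real) \<Rightarrow> (nat \<Rightarrow> nat \<Rightarrow> bool) \<Rightarrow> nat \<Rightarrow> bool" where
  "left_covered n x y prec i \<longleftrightarrow> (\<forall>t\<in>{-1/2..1/2}. \<not> visible n x y prec i (left_side x y i t))"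

lemma visible_beyond_covered_left_corner:
  assumes lay: "is_layout w n x prec"
    and corner: "\<not> visible n x y prec i (x i - 1/2, \<eta>)"
    and vis: "visible n x y prec i (x i + t, \<eta>)" and t: "-1/2 \<le> t"
  shows "1 < x i + t"
proof -
  obtain j where j: "j < n" "j \<noteq> i" "\<not> prec j i" "(x i - 1/2, \<eta>) \<in> sq x y j"
    using corner by (auto simp: visible_def)
  have "\<bar>x i + t - x j\<bar> > 1/2"
    using visible_outside_square_in_front[OF vis j(1-3)] j(4) by (simp add: sq_def)
  moreover have "1/2 \<le> x j"
    using lay j(1) by (simp add: is_layout_def)
  ultimately show ?thesis
    using j(4) t by (auto simp: sq_def abs_real_def split: if_splits)
qed

lemma horizontal_visible_length_le:
  assumes lay: "is_layout w n x prec" and i: "i < n"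
    and corner: "\<not> visible n x y prec i (x i - 1/2, \<eta>)"
  shows "visible_length n x y prec i (\<lambda>t. (x i + t, \<eta>)) \<le> x i - 1/2"
proof -
  have "1/2 \<le> x i"
    using lay i by (simp add: is_layout_def)
  moreover have "measure lebesgue {t \<in> {-1/2..1/2}. visible n x y prec i (x i + t, \<eta>)}
      \<le> max 0 (1/2 - (1 - x i))"
    using visible_beyond_covered_left_corner[OF lay corner]
    by (intro measure_Collect_le_of_lower_bound) force
  ultimately show ?thesis
    by (simp add: visible_length_def)
qed

lemma horizontal_visible_length_le_front:
  assumes lay: "is_layout w n x prec" and w: "w \<le> 2"
    and corner: "\<not> visible n x y prec i (x i - 1/2, \<eta>)"
    and s: "s < n" "s \<noteq> i" "\<not> prec s i" "\<bar>\<eta> - y s\<bar> \<le> 1/2"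
  shows "visible_length n x y prec i (\<lambda>t. (x i + t, \<eta>)) \<le> max 0 (x i - x s)"
proof -
  have "x s \<le> w - 1/2"
    using lay s(1) unfolding is_layout_def by blast
  then have "x s + 1/2 - x i \<le> t"
    if "-1/2 \<le> t" "visible n x y prec i (x i + t, \<eta>)" for t
    using visible_beyond_covered_left_corner[OF lay corner that(2,1)]
      visible_outside_square_in_front[OF that(2) s] w by (auto simp: abs_real_def split: if_splits)
  then have "measure lebesgue {t \<in> {-1/2..1/2}. visible n x y prec i (x i + t, \<eta>)}
      \<le> max 0 (1/2 - (x s + 1/2 - x i))"
    by (intro measure_Collect_le_of_lower_bound) auto
  then show ?thesis
    by (simp add: visible_length_def)
qed

lemma left_covered_horizontal_length_gt:
  assumes "left_covered n x y prec i" and "gap n x y prec i > \<epsilon>"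
  shows "1 + \<epsilon> <
    visible_length n x y prec i (bottom_side x y i) + visible_length n x y prec i (top_side x y i)"
proof -
  have "{t \<in> {-1/2..1/2}. visible n x y prec i (left_side x y i t)} = {}"
    using assms(1) by (auto simp: left_covered_def)
  then have "visible_length n x y prec i (left_side x y i) = 0"
    unfolding visible_length_def by (metis measure_empty)
  then show ?thesis
    using assms(2) visible_length_le_1[of n x y prec i "right_side x y i"]
    by (simp add: gap_def vis_perimeter_eq_visible_length)
qed

lemma bottom_side_eq: "bottom_side x y i = (\<lambda>t. (x i + t, y i - 1/2))"
  and top_side_eq: "top_side x y i = (\<lambda>t. (x i + t, y i + 1/2))"
  by (simp_all add: fun_eq_iff bottom_side_def top_side_def)

lemma left_covered_corners:
  assumes "left_covered n x y prec i"
  shows "\<not> visible n x y prec i (x i - 1/2, y i - 1/2)"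
    and "\<not> visible n x y prec i (x i - 1/2, y i + 1/2)"
  using assms[unfolded left_covered_def, rule_format, of "-1/2"]
    assms[unfolded left_covered_def, rule_format, of "1/2"]
  by (simp_all add: left_side_def)

lemma left_covered_horizontal_visible_length_le:
  assumes lay: "is_layout w n x prec" and i: "i < n" and cov: "left_covered n x y prec i"
  shows "visible_length n x y prec i (bottom_side x y i) \<le> x i - 1/2"
    and "visible_length n x y prec i (top_side x y i) \<le> x i - 1/2"
  using horizontal_visible_length_le[OF lay i left_covered_corners(1)[OF cov]]
    horizontal_visible_length_le[OF lay i left_covered_corners(2)[OF cov]]
  by (simp_all add: bottom_side_eq top_side_eq)

lemma left_covered_offset_gt:
  assumes lay: "is_layout w n x prec" and i: "i < n"
    and cov: "left_covered n x y prec i" and gap: "gap n x y prec i > \<epsilon>"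
  shows "1 + \<epsilon> < 2 * (x i - 1/2)"
  using left_covered_horizontal_length_gt[OF cov gap] left_covered_horizontal_visible_length_le[OF lay i cov]
  by (simp add: algebra_simps)

lemma left_covered_offset_gt_front:
  assumes lay: "is_layout w n x prec" and w: "w \<le> 2" and i: "i < n"
    and cov: "left_covered n x y prec i" and gap: "gap n x y prec i > \<epsilon>" and "0 \<le> \<epsilon>"
    and s: "s < n" "s \<noteq> i" "\<not> prec s i" "\<bar>y s - y i\<bar> \<le> 1"
  shows "1 + \<epsilon> < 2 * (x i - 1/2) - (x s - 1/2)"
proof -
  let ?B = "visible_length n x y prec i (bottom_side x y i)"
  let ?T = "visible_length n x y prec i (top_side x y i)"
  have "?B \<le> max 0 (x i - x s) \<or> ?T \<le> max 0 (x i - x s)"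
  proof (cases "y i \<le> y s")
    case True
    then have "\<bar>y i + 1/2 - y s\<bar> \<le> 1/2"
      using s(4) by linarith
    then show ?thesis unfolding top_side_eq
      using horizontal_visible_length_le_front[OF lay w left_covered_corners(2)[OF cov] s(1-3)] by blast
  next
    case False
    then have "\<bar>y i - 1/2 - y s\<bar> \<le> 1/2"
      using s(4) by linarith
    then show ?thesis unfolding bottom_side_eq
      using horizontal_visible_length_le_front[OF lay w left_covered_corners(1)[OF cov] s(1-3)] by blast
  qed
  moreover have "x i \<le> w - 1/2"
    using lay i unfolding is_layout_def by blast
  ultimately show ?thesis
    using left_covered_horizontal_length_gt[OF cov gap] left_covered_horizontal_visible_length_le[OF lay i cov]
      w \<open>0 \<le> \<epsilon>\<close>
    by (auto simp: algebra_simps max_def split: if_splits)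
qed

definition mirror :: "real \<Rightarrow> (nat \<Rightarrow> real) \<Rightarrow> nat \<Rightarrow> real" where
  "mirror w x i = w - x i"

lemma visible_mirror:
  "visible n (mirror w x) y prec i (a, b) \<longleftrightarrow> visible n x y prec i (w - a, b)"
proof -
  have "\<bar>a - (w - x j)\<bar> = \<bar>w - a - x j\<bar>" for j
    by linarith
  then show ?thesis
    by (simp add: visible_def sq_def mirror_def)
qed

lemma is_layout_mirror:
  assumes "is_layout w n x prec"
  shows "is_layout w n (mirror w x) prec"
proof -
  have "1/2 \<le> x i \<and> x i \<le> w - 1/2" if "i < n" for i
    using assms that unfolding is_layout_def by blast
  then have "1/2 \<le> mirror w x i \<and> mirror w x i \<le> w - 1/2" if "i < n" for i
    using that by (force simp: mirror_def)
  then show ?thesis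
    using assms unfolding is_layout_def by blast
qed

lemma left_covered_mirror:
  "left_covered n (mirror w x) y prec i \<longleftrightarrow> (\<forall>t\<in>{-1/2..1/2}. \<not> visible n x y prec i (right_side x y i t))"
  by (simp add: left_covered_def left_side_def right_side_def visible_mirror mirror_def)

lemma vis_perimeter_mirror: "vis_perimeter n (mirror w x) y prec i = vis_perimeter n x y prec i"
proof -
  let ?x' = "mirror w x"
  have "visible_length n ?x' y prec i (left_side ?x' y i) = visible_length n x y prec i (right_side x y i)"
    "visible_length n ?x' y prec i (right_side ?x' y i) = visible_length n x y prec i (left_side x y i)"
    by (simp_all add: visible_length_def left_side_def right_side_def visible_mirror mirror_def)
  moreover have "visible_length n ?x' y prec i (bottom_side ?x' y i) = visible_length n x y prec i (bottom_side x y i)"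
    using measure_Collect_reflect[of "1/2" "\<lambda>t. visible n x y prec i (bottom_side x y i t)"]
    by (simp add: visible_length_def bottom_side_def visible_mirror mirror_def)
  moreover have "visible_length n ?x' y prec i (top_side ?x' y i) = visible_length n x y prec i (top_side x y i)"
    using measure_Collect_reflect[of "1/2" "\<lambda>t. visible n x y prec i (top_side x y i t)"]
    by (simp add: visible_length_def top_side_def visible_mirror mirror_def)
  ultimately show ?thesis
    by (simp add: vis_perimeter_eq_visible_length)
qed

lemma reasonable_mirror: "reasonable \<epsilon> n (mirror w x) y prec \<longleftrightarrow> reasonable \<epsilon> n x y prec"
  by (simp add: reasonable_def gap_def vis_perimeter_mirror)

lemma finite_total_has_least:
  assumes "finite A" "A \<noteq> {}"
    and "\<forall>i\<in>A. \<forall>j\<in>A. \<forall>l\<in>A. prec i j \<and> prec j l \<longrightarrow> prec i l"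
    and "\<forall>i\<in>A. \<forall>j\<in>A. i \<noteq> j \<longrightarrow> prec i j \<or> prec j i"
  shows "\<exists>b\<in>A. \<forall>t\<in>A. t \<noteq> b \<longrightarrow> prec b t"
  using assms
proof (induction A rule: finite_ne_induct)
  case (singleton x)
  then show ?case by auto
next
  case (insert x F)
  have "\<exists>b\<in>F. \<forall>t\<in>F. t \<noteq> b \<longrightarrow> prec b t"
    using insert.prems by (intro insert.IH) blast+
  then obtain b where b: "b \<in> F" "\<forall>t\<in>F. t \<noteq> b \<longrightarrow> prec b t"
    by blast
  show ?case
  proof (cases "prec x b")
    case True
    have "prec x t" if "t \<in> F" for t
      using that True b insert.prems(1) by (cases "t = b") blast+
    then show ?thesis
      by blast
  next
    case False
    have "x \<noteq> b"
      using b(1) insert.hyps(3) by blast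
    then have "prec b x"
      using False insert.prems(2)[rule_format, of x b] b(1) by simp
    then show ?thesis
      using b by blast
  qed
qed

lemma halving_chain_bound:
  fixes e :: "'a \<Rightarrow> real"
  assumes "finite S" "S \<noteq> {}"
    and "\<forall>i\<in>S. \<forall>j\<in>S. \<forall>l\<in>S. prec i j \<and> prec j l \<longrightarrow> prec i l"
    and "\<forall>i\<in>S. \<forall>j\<in>S. i \<noteq> j \<longrightarrow> prec i j \<or> prec j i"
    and "\<forall>i\<in>S. e i < c / 2"
    and "\<forall>i\<in>S. \<forall>s\<in>S. prec i s \<longrightarrow> e i < e s / 2"
  shows "\<exists>b\<in>S. e b < c / 2 ^ card S"
  using assms
proof (induction "card S" arbitrary: S)
  case 0
  then show ?case
    by (metis card_0_eq)
next
  case (Suc m)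
  obtain b where b: "b \<in> S" "\<forall>t\<in>S. t \<noteq> b \<longrightarrow> prec b t"
    using finite_total_has_least[OF Suc.prems(1-4)] by blast
  show ?case
  proof (cases "S = {b}")
    case True
    then show ?thesis
      using Suc.prems(5) by simp
  next
    case False
    then have "S - {b} \<noteq> {}" and card: "m = card (S - {b})"
      using b(1) Suc.hyps(2) Suc.prems(1) by auto
    have "\<exists>b'\<in>S - {b}. e b' < c / 2 ^ card (S - {b})"
      using Suc.prems \<open>S - {b} \<noteq> {}\<close> by (intro Suc.hyps(1)[OF card]) blast+
    then obtain b' where b': "b' \<in> S - {b}" "e b' < c / 2 ^ m"
      unfolding card by blast
    have "e b < e b' / 2"
      using b b'(1) Suc.prems(6) by blast
    also have "\<dots> < c / 2 ^ m / 2"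
      using b'(2) by simp
    also have "\<dots> = c / 2 ^ card S"
      by (simp flip: Suc.hyps(2) add: divide_divide_eq_left mult.commute)
    finally show ?thesis
      using b(1) by blast
  qed
qed

lemma le_log2_plus_1_of_halved:
  fixes k e :: real
  assumes k: "1 \<le> k" and "1/k \<le> e" and "e < (1 + 1/k) / 2 ^ m"
  shows "real m \<le> log 2 k + 1"
proof -
  have "1/k * 2 ^ m \<le> e * 2 ^ m"
    using assms(2) by (rule mult_right_mono) simp
  also have "\<dots> < 1 + 1/k"
    using assms(3) by (simp add: pos_less_divide_eq)
  finally have "k * (1/k * 2 ^ m) < k * (1 + 1/k)"
    using k by (intro mult_strict_left_mono) auto
  then have "2 ^ m < 2 * k"
    using k by (simp add: distrib_left)
  have "real m = log 2 (2 ^ m)"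
    by (simp add: log_nat_power)
  also have "\<dots> < log 2 (2 * k)"
    using \<open>2 ^ m < 2 * k\<close> k by (subst log_less_cancel_iff) auto
  also have "\<dots> = log 2 k + 1"
    using k by (simp add: log_mult)
  finally show ?thesis
    by simp
qed

lemma card_left_covered_window_le:
  fixes k :: real
  assumes lay: "is_layout w n x prec" and w: "w \<le> 2" and k: "1 \<le> k"
    and reas: "reasonable (1/k) n x y prec"
  shows "real (card {i. i < n \<and> left_covered n x y prec i \<and> y i \<in> {a..a+1}}) \<le> log 2 k + 1"
proof -
  define S where "S = {i. i < n \<and> left_covered n x y prec i \<and> y i \<in> {a..a+1}}"
  define c where "c = 1 + 1/k"
  define e where "e i = c - (x i - 1/2)" for i
  have S_lt: "i < n" and S_cov: "left_covered n x y prec i" and gap: "gap n x y prec i > 1/k"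
    if "i \<in> S" for i
    using that reas by (simp_all add: S_def reasonable_def)
  have irr: "\<forall>i\<in>S. \<not> prec i i"
    and tr: "\<forall>i\<in>S. \<forall>j\<in>S. \<forall>l\<in>S. prec i j \<and> prec j l \<longrightarrow> prec i l"
    and tot: "\<forall>i\<in>S. \<forall>j\<in>S. i \<noteq> j \<longrightarrow> prec i j \<or> prec j i"
    using lay S_lt unfolding is_layout_def by (meson, meson, meson)
  have base: "\<forall>i\<in>S. e i < c / 2"
  proof
    fix i assume "i \<in> S"
    then have "1 + 1/k < 2 * (x i - 1/2)"
      using left_covered_offset_gt[OF lay S_lt S_cov gap] by blast
    then show "e i < c / 2"
      by (simp add: e_def c_def algebra_simps)
  qed
  have step: "\<forall>i\<in>S. \<forall>s\<in>S. prec i s \<longrightarrow> e i < e s / 2"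
  proof (intro ballI impI)
    fix i s assume i: "i \<in> S" and s: "s \<in> S" and "prec i s"
    then have "s \<noteq> i" "\<not> prec s i"
      using irr tr by blast+
    moreover have "\<bar>y s - y i\<bar> \<le> 1"
      using i s by (auto simp: S_def)
    ultimately have "1 + 1/k < 2 * (x i - 1/2) - (x s - 1/2)"
      using left_covered_offset_gt_front[OF lay w S_lt[OF i] S_cov[OF i] gap[OF i] _ S_lt[OF s]] k
      by simp
    then show "e i < e s / 2"
      by (simp add: e_def c_def algebra_simps)
  qed
  have "real (card S) \<le> log 2 k + 1"
  proof (cases "S = {}")
    case True
    then show ?thesis
      using k by simp
  next
    case False
    have fin: "finite S"
      by (rule finite_subset[of _ "{..<n}"]) (auto dest: S_lt)
    obtain b where b: "b \<in> S" "e b < c / 2 ^ card S"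
      using halving_chain_bound[OF fin False tr tot base step] by blast
    have "x b \<le> w - 1/2"
      using lay S_lt[OF b(1)] unfolding is_layout_def by blast
    then have "1/k \<le> e b"
      using w by (simp add: e_def c_def)
    then show ?thesis
      using le_log2_plus_1_of_halved[OF k _ b(2)[unfolded c_def]] by blast
  qed
  then show ?thesis
    by (simp add: S_def)
qed

theorem lemma14:
  fixes w h k a :: real and n :: nat and y x :: "nat \<Rightarrow> real" and prec :: "nat \<Rightarrow> nat \<Rightarrow> bool"
  assumes "1 < w" "w \<le> 2" "h > 1" "k \<ge> 2"
    and "\<forall>i<n. 1/2 \<le> y i \<and> y i \<le> h - 1/2"
    and "\<forall>i. Suc i < n \<longrightarrow> y (Suc i) - y i = 1 / k"
    and "is_layout w n x prec"
    and "reasonable (1 / k) n x y prec"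
  shows "real (card {i. i < n \<and> standard_bad_square n x y prec i \<and> y i \<in> {a..a+1}})
           \<le> 2 * (log 2 k + 1)"
proof -
  define W where "W x' = {i. i < n \<and> left_covered n x' y prec i \<and> y i \<in> {a..a+1}}" for x'
  have fin: "finite (W x')" for x'
    by (rule finite_subset[of _ "{..<n}"]) (auto simp: W_def)
  have "{i. i < n \<and> standard_bad_square n x y prec i \<and> y i \<in> {a..a+1}}
      \<subseteq> W x \<union> W (mirror w x)"
    unfolding W_def standard_bad_square_def left_covered_mirror by (auto simp: left_covered_def)
  then have "card {i. i < n \<and> standard_bad_square n x y prec i \<and> y i \<in> {a..a+1}}
      \<le> card (W x) + card (W (mirror w x))"
    using fin by (meson card_Un_le card_mono finite_UnI order_trans)
  then have "real (card {i. i < n \<and> standard_bad_square n x y prec i \<and> y i \<in> {a..a+1}})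
      \<le> real (card (W x)) + real (card (W (mirror w x)))"
    by linarith
  moreover have "real (card (W x)) \<le> log 2 k + 1"
    using card_left_covered_window_le[OF assms(7,2) _ assms(8)] assms(4) by (simp add: W_def)
  moreover have "real (card (W (mirror w x))) \<le> log 2 k + 1"
    using card_left_covered_window_le[OF is_layout_mirror[OF assms(7)] assms(2) _
        reasonable_mirror[THEN iffD2, OF assms(8)]] assms(4)
    by (simp add: W_def)
  ultimately show ?thesis
    by (simp add: algebra_simps)
qed

end
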